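(* Let $(S_n)_{n\ge0}$ be the random walk with two memory channels with memory parameter $p\in(7/8,1)$. Then $\operatorname{Var}(S_n)\sim n^2$ as $n\to\infty$, i.e. the walk is ballistic.
   Context: A random variable is $\mathrm{Rad}(q)$ if it equals $+1$ with probability $q$ and $-1$ with probability $1-q$. Random walk with two memory channels with parameter $p\in(0,1)$: $S_0=0$; $X_1,X_2$ are i.i.d. $\mathrm{Rad}(1/2)$; for each $n\ge 2$, let $U_{1,n+1},U_{2,n+1}$ be i.i.d. uniform on $\{1,\dots,n\}$ and $\alpha_{1,n+1},\alpha_{2,n+1}$ i.i.d. $\mathrm{Rad}(p)$, all mutually independent and independent of $X_1,\dots,X_n$ (and of all earlier draws); set $T_{n+1}=\alpha_{1,n+1}X_{U_{1,n+1}}+\alpha_{2,n+1}X_{U_{2,n+1}}$ and $X_{n+1}=\max(-1,\min(1,T_{n+1}))\in\{-1,0,1\}$. Then $S_n=X_1+\dots+X_n$. Here $\operatorname{Var}(S_n)\sim n^2$ means $\operatorname{Var}(S_n)$ grows at the order $n^2$ (the ratio $\operatorname{Var}(S_n)/n^2$ stays bounded away from $0$ and $\infty$). *)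

theory Defs
  imports "HOL-Probability.Probability" "HOL-Library.Landau_Symbols"
begin

definition rad :: "real \<Rightarrow> real pmf" where
  "rad q = map_pmf (\<lambda>b. if b then 1 else -1) (bernoulli_pmf q)"

definition clamp :: "real \<Rightarrow> real" where
  "clamp t = max (-1) (min 1 t)"

definition step :: "real \<Rightarrow> real list \<Rightarrow> real list pmf" where
  "step p xs =
     pmf_of_set {1..length xs} \<bind> (\<lambda>u1.
     pmf_of_set {1..length xs} \<bind> (\<lambda>u2.
     rad p \<bind> (\<lambda>a1.
     rad p \<bind> (\<lambda>a2.
     return_pmf (xs @ [clamp (a1 * xs ! (u1 - 1) + a2 * xs ! (u2 - 1))])))))"

fun walk :: "real \<Rightarrow> nat \<Rightarrow> real list pmf" where
  "walk p 0 = return_pmf []"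
| "walk p (Suc n) = walk p n \<bind>
     (\<lambda>xs. if n < 2 then map_pmf (\<lambda>x. xs @ [x]) (rad (1/2)) else step p xs)"

definition var_S :: "real \<Rightarrow> nat \<Rightarrow> real" where
  "var_S p n = measure_pmf.variance (walk p n) (\<lambda>xs. sum_list xs)"

end

theory Submission
  imports Defs
begin

text \<open>By symmetry \<open>S\<^sub>n\<close> is centred, so \<open>Var S\<^sub>n = E S\<^sub>n\<^sup>2 \<le> n\<^sup>2\<close>. For the lower bound let \<open>m\<close> be
  the empirical mean of the history and \<open>q\<close> its fraction of nonzero steps. Given the history,
  the next step is \<open>1\<close>, \<open>-1\<close> or \<open>0\<close> with probabilities depending only on \<open>(m, q)\<close>, and
  \<open>(m, q)\<close> follows a mean-field drift with a fixed point \<open>(m\<^sub>*, q\<^sub>*)\<close>, \<open>m\<^sub>* \<noteq> 0\<close>.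
  The function \<open>\<Phi> = m\<^sup>2 exp (- m\<^sup>2 / m\<^sub>*\<^sup>2 - w (q - q\<^sub>*)\<^sup>2)\<close>, with \<open>w\<close> chosen so that the
  terms of order \<open>m\<^sup>4\<close> cancel, has nonnegative first-order drift as soon as \<open>q\<^sub>* > 2/3\<close>, i.e. \<open>p > 7/8\<close>;
  hence \<open>E \<Phi>(n) - K/n\<close> is nondecreasing. Independently, \<open>E S\<^sub>n\<^sup>2\<close> is multiplied by at least
  \<open>1 + 2(2p - 1)/n\<close> at each step, so it is at least of order \<open>n powr (3/2)\<close> and
  \<open>E \<Phi>(n\<^sub>0) \<ge> 2K/n\<^sub>0\<close> for some \<open>n\<^sub>0\<close>. Then \<open>E S\<^sub>n\<^sup>2 / n\<^sup>2 \<ge> E \<Phi>(n) \<ge> K/n\<^sub>0\<close> for all \<open>n \<ge> n\<^sub>0\<close>.\<close>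

lemma expectation_bind_pmf_finite:
  fixes h :: "'b \<Rightarrow> real"
  assumes "finite (set_pmf M)" "\<And>x. x \<in> set_pmf M \<Longrightarrow> finite (set_pmf (f x))"
  shows "measure_pmf.expectation (M \<bind> f) h =
    measure_pmf.expectation M (\<lambda>x. measure_pmf.expectation (f x) h)"
  using assms by (simp add: pmf_expectation_bind[of "set_pmf M"] integral_measure_pmf[of "set_pmf M"])

lemma expectation_mono_finite:
  fixes f g :: "'a \<Rightarrow> real"
  assumes "finite (set_pmf M)" "\<And>x. x \<in> set_pmf M \<Longrightarrow> f x \<le> g x"
  shows "measure_pmf.expectation M f \<le> measure_pmf.expectation M g"
  using assms by (intro integral_mono_AE integrable_measure_pmf_finite) (auto simp: AE_measure_pmf_iff)

lemma expectation_cong_pmf: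
  fixes f g :: "'a \<Rightarrow> real"
  assumes "\<And>x. x \<in> set_pmf M \<Longrightarrow> f x = g x"
  shows "measure_pmf.expectation M f = measure_pmf.expectation M g"
  using assms by (intro integral_cong_AE) (auto simp: AE_measure_pmf_iff)

lemma set_pmf_rad: "set_pmf (rad q) \<subseteq> {-1, 1}"
  unfolding rad_def by auto

lemma finite_set_pmf_rad: "finite (set_pmf (rad q))"
  using set_pmf_rad finite_subset by blast

lemma expectation_rad:
  fixes f :: "real \<Rightarrow> real"
  assumes "0 \<le> q" "q \<le> 1"
  shows "measure_pmf.expectation (rad q) f = q * f 1 + (1 - q) * f (-1)"
  unfolding rad_def using assms by simp

lemma sum_atLeastAtMost_nth:
  "(\<Sum>u = 1..length xs. g (xs ! (u - 1))) = (\<Sum>x\<leftarrow>xs. g x)"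
proof -
  have "(\<Sum>u = 1..length xs. g (xs ! (u - 1))) = (\<Sum>i<length xs. g (xs ! i))"
    by (rule sum.reindex_bij_witness[of _ Suc "\<lambda>u. u - 1"]) auto
  then show ?thesis
    by (simp add: sum_list_sum_nth atLeast0LessThan)
qed

definition sum_sq :: "real list \<Rightarrow> real" where
  "sum_sq xs = (\<Sum>x\<leftarrow>xs. x\<^sup>2)"

definition mean :: "real list \<Rightarrow> real" where
  "mean xs = sum_list xs / length xs"

definition mean_sq :: "real list \<Rightarrow> real" where
  "mean_sq xs = sum_sq xs / length xs"

lemma sum_sq_Nil [simp]: "sum_sq [] = 0"
  by (simp add: sum_sq_def)

lemma sum_sq_Cons [simp]: "sum_sq (x # xs) = x\<^sup>2 + sum_sq xs"
  by (simp add: sum_sq_def)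

lemma sum_sq_append_single [simp]: "sum_sq (xs @ [c]) = sum_sq xs + c\<^sup>2"
  by (simp add: sum_sq_def)

lemma sum_sq_map_uminus [simp]: "sum_sq (map uminus xs) = sum_sq xs"
  by (induction xs) (auto simp: sum_sq_def)

lemma sum_list_map_uminus [simp]: "sum_list (map uminus xs) = - sum_list (xs :: real list)"
  by (induction xs) auto

lemma mean_map_uminus [simp]: "mean (map uminus xs) = - mean xs"
  by (simp add: mean_def)

lemma mean_sq_map_uminus [simp]: "mean_sq (map uminus xs) = mean_sq xs"
  by (simp add: mean_sq_def)

lemma ternary_list_bounds:
  assumes "set xs \<subseteq> {-1, 0, 1}"
  shows "\<bar>sum_list xs\<bar> \<le> sum_sq xs" "sum_sq xs \<le> length xs"
  using assms by (induction xs) auto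

lemma ternary_mean_bounds:
  assumes "xs \<noteq> []" "set xs \<subseteq> {-1, 0, 1}"
  shows "\<bar>mean xs\<bar> \<le> mean_sq xs" "mean_sq xs \<le> 1"
  using ternary_list_bounds[OF assms(2)] assms(1)
  by (auto simp: mean_def mean_sq_def abs_divide divide_right_mono)

lemma running_average_append:
  assumes "(n :: real) > 0"
  shows "(a + b) / (n + 1) = a / n + (b - a / n) / (n + 1)"
proof -
  have "n + 1 > 0" using assms by simp
  with assms show ?thesis by (simp add: divide_simps) (simp add: algebra_simps)
qed

lemma mean_append_single:
  assumes "xs \<noteq> []"
  shows "mean (xs @ [c]) = mean xs + (c - mean xs) / (real (length xs) + 1)"
  using assms running_average_append[of "length xs" "sum_list xs" c] by (simp add: mean_def add.commute)

lemma mean_sq_append_single: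
  assumes "xs \<noteq> []"
  shows "mean_sq (xs @ [c]) = mean_sq xs + (c\<^sup>2 - mean_sq xs) / (real (length xs) + 1)"
  using assms running_average_append[of "length xs" "sum_sq xs" "c\<^sup>2"] by (simp add: mean_sq_def add.commute)

lemma sum_list_channel:
  fixes \<phi> :: "real \<Rightarrow> real"
  assumes "set xs \<subseteq> {-1, 0, 1}"
  shows "(\<Sum>x\<leftarrow>xs. p * \<phi> x + (1 - p) * \<phi> (-x)) =
    (sum_sq xs + (2*p - 1) * sum_list xs) / 2 * \<phi> 1
    + (sum_sq xs - (2*p - 1) * sum_list xs) / 2 * \<phi> (-1)
    + (length xs - sum_sq xs) * \<phi> 0"
  using assms
proof (induction xs)
  case Nil
  then show ?case by simp
next
  case (Cons x xs)
  then have "x = -1 \<or> x = 0 \<or> x = 1" by auto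
  with Cons show ?case
    by (elim disjE) (simp_all add: algebra_simps add_divide_distrib diff_divide_distrib)
qed

text \<open>A single channel \<open>\<alpha> X\<^sub>U\<close> equals \<open>\<plusminus>1\<close> with probability \<open>(q \<plusminus> r m)/2\<close> and
  \<open>0\<close> with probability \<open>1 - q\<close>, where \<open>m\<close>, \<open>q\<close> are the mean and the mean square of
  the history and \<open>r = 2p - 1\<close>.\<close>

lemma channel_average:
  fixes \<phi> :: "real \<Rightarrow> real"
  assumes "xs \<noteq> []" "set xs \<subseteq> {-1, 0, 1}"
  shows "(\<Sum>u = 1..length xs. p * \<phi> (xs ! (u - 1)) + (1 - p) * \<phi> (- xs ! (u - 1))) / length xs =
    (mean_sq xs + (2*p - 1) * mean xs) / 2 * \<phi> 1
    + (mean_sq xs - (2*p - 1) * mean xs) / 2 * \<phi> (-1)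
    + (1 - mean_sq xs) * \<phi> 0"
proof -
  have "length xs > 0" using assms(1) by simp
  then show ?thesis
    unfolding sum_atLeastAtMost_nth[of "\<lambda>x. p * \<phi> x + (1 - p) * \<phi> (-x)"]
      sum_list_channel[OF assms(2)]
    by (simp add: mean_def mean_sq_def field_simps)
qed

text \<open>The clamped sum of two independent channels equals \<open>1\<close>, \<open>-1\<close>, \<open>0\<close> with probabilities
  \<open>prob_up r m q\<close>, \<open>prob_up r (-m) q\<close>, \<open>prob_zero r m q\<close>.\<close>

definition prob_up :: "real \<Rightarrow> real \<Rightarrow> real \<Rightarrow> real" where
  "prob_up r m q = ((q + r * m) / 2)\<^sup>2 + (q + r * m) * (1 - q)"

definition prob_zero :: "real \<Rightarrow> real \<Rightarrow> real \<Rightarrow> real" where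
  "prob_zero r m q = (1 - q)\<^sup>2 + (q + r * m) * (q - r * m) / 2"

lemma prob_zero_uminus [simp]: "prob_zero r (- m) q = prob_zero r m q"
  by (simp add: prob_zero_def algebra_simps)

lemma prob_total: "prob_up r m q + prob_up r (- m) q + prob_zero r m q = 1"
  by (simp add: prob_up_def prob_zero_def power2_eq_square field_simps)

lemma prob_up_minus_down: "prob_up r m q - prob_up r (- m) q = r * m * (2 - q)"
  by (simp add: prob_up_def power2_eq_square field_simps)

lemma prob_up_plus_down: "prob_up r m q + prob_up r (- m) q = 2*q - 3/2 * q\<^sup>2 + r\<^sup>2 * m\<^sup>2 / 2"
  by (simp add: prob_up_def power2_eq_square field_simps)

lemma prob_nonneg:
  assumes "\<bar>r * m\<bar> \<le> q" "q \<le> 1"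
  shows "0 \<le> prob_up r m q" "0 \<le> prob_zero r m q"
proof -
  have "0 \<le> q + r * m" "0 \<le> q - r * m" "0 \<le> 1 - q" using assms by auto
  then show "0 \<le> prob_up r m q" "0 \<le> prob_zero r m q"
    unfolding prob_up_def prob_zero_def by simp_all
qed

lemma bias_mean_le_mean_sq:
  assumes "xs \<noteq> []" "set xs \<subseteq> {-1, 0, 1}" "\<bar>r\<bar> \<le> 1"
  shows "\<bar>r * mean xs\<bar> \<le> mean_sq xs"
proof -
  have "\<bar>r * mean xs\<bar> \<le> 1 * \<bar>mean xs\<bar>"
    unfolding abs_mult using assms(3) by (intro mult_right_mono) auto
  with ternary_mean_bounds(1)[OF assms(1,2)] show ?thesis by simp
qed

lemma finite_set_pmf_step:
  assumes "xs \<noteq> []"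
  shows "finite (set_pmf (step p xs))"
proof -
  have "Suc 0 \<le> length xs" using assms by (simp add: Suc_le_eq)
  then show ?thesis
    by (auto simp: step_def set_bind_pmf intro!: finite_UN_I finite_set_pmf_rad)
qed

lemma expectation_step_sum:
  fixes h :: "real list \<Rightarrow> real"
  assumes "xs \<noteq> []" "0 \<le> p" "p \<le> 1"
  defines "\<psi> \<equiv> \<lambda>t. h (xs @ [clamp t])" and "n \<equiv> length xs"
  shows "measure_pmf.expectation (step p xs) h =
    (\<Sum>u1 = 1..n. (\<Sum>u2 = 1..n.
        p * (p * \<psi> (xs!(u1-1) + xs!(u2-1)) + (1-p) * \<psi> (xs!(u1-1) - xs!(u2-1)))
      + (1-p) * (p * \<psi> (- xs!(u1-1) + xs!(u2-1)) + (1-p) * \<psi> (- xs!(u1-1) - xs!(u2-1)))) / n) / n"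
proof -
  have n: "Suc 0 \<le> n" using assms(1) by (simp add: n_def Suc_le_eq)
  show ?thesis
    unfolding step_def n_def[symmetric]
    by (simp add: expectation_bind_pmf_finite set_bind_pmf finite_set_pmf_rad n
        integral_pmf_of_set expectation_rad assms(2,3) \<psi>_def sum_divide_distrib[symmetric])
qed

lemma expectation_step:
  fixes h :: "real list \<Rightarrow> real"
  assumes xs: "xs \<noteq> []" "set xs \<subseteq> {-1, 0, 1}" and p: "0 \<le> p" "p \<le> 1"
  defines "r \<equiv> 2*p - 1"
  shows "measure_pmf.expectation (step p xs) h =
      prob_up r (mean xs) (mean_sq xs) * h (xs @ [1])
    + prob_up r (- mean xs) (mean_sq xs) * h (xs @ [-1])
    + prob_zero r (mean xs) (mean_sq xs) * h (xs @ [0])"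
proof -
  define n where "n = length xs"
  define \<psi> where "\<psi> t = h (xs @ [clamp t])" for t
  define y_up where "y_up = (mean_sq xs + r * mean xs) / 2"
  define y_down where "y_down = (mean_sq xs - r * mean xs) / 2"
  define y_zero where "y_zero = 1 - mean_sq xs"
  have avg: "(\<Sum>u = 1..n. p * \<phi> (xs!(u-1)) + (1-p) * \<phi> (- xs!(u-1))) / n =
      y_up * \<phi> 1 + y_down * \<phi> (-1) + y_zero * \<phi> 0" for \<phi>
    using channel_average[OF xs, of p \<phi>] by (simp add: n_def y_up_def y_down_def y_zero_def r_def)
  define \<Psi> where "\<Psi> a = y_up * \<psi> (a + 1) + y_down * \<psi> (a - 1) + y_zero * \<psi> a" for a
  have inner: "(\<Sum>u2 = 1..n.
        p * (p * \<psi> (a + xs!(u2-1)) + (1-p) * \<psi> (a - xs!(u2-1)))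
      + (1-p) * (p * \<psi> (- a + xs!(u2-1)) + (1-p) * \<psi> (- a - xs!(u2-1)))) / n
      = p * \<Psi> a + (1-p) * \<Psi> (-a)" for a
  proof -
    have linear: "(\<Sum>u = 1..n. p * F u + (1-p) * G u) / n
        = p * ((\<Sum>u = 1..n. F u) / n) + (1-p) * ((\<Sum>u = 1..n. G u) / n)" for F G :: "nat \<Rightarrow> real"
      by (simp add: sum.distrib sum_distrib_left[symmetric] add_divide_distrib)
    have "(\<Sum>u = 1..n. p * \<psi> (a + xs!(u-1)) + (1-p) * \<psi> (a - xs!(u-1))) / n = \<Psi> a"
      using avg[of "\<lambda>y. \<psi> (a + y)"] by (simp add: \<Psi>_def)
    moreover have "(\<Sum>u = 1..n. p * \<psi> (- a + xs!(u-1)) + (1-p) * \<psi> (- a - xs!(u-1))) / n = \<Psi> (-a)"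
      using avg[of "\<lambda>y. \<psi> (- a + y)"] by (simp add: \<Psi>_def)
    ultimately show ?thesis
      unfolding linear by simp
  qed
  have "measure_pmf.expectation (step p xs) h =
      (\<Sum>u1 = 1..n. p * \<Psi> (xs!(u1-1)) + (1-p) * \<Psi> (- xs!(u1-1))) / n"
    unfolding expectation_step_sum[OF xs(1) p] n_def[symmetric] \<psi>_def[symmetric] inner ..
  also have "\<dots> = y_up * \<Psi> 1 + y_down * \<Psi> (-1) + y_zero * \<Psi> 0"
    by (rule avg)
  finally show ?thesis
    by (simp add: \<Psi>_def \<psi>_def clamp_def prob_up_def prob_zero_def y_up_def y_down_def y_zero_def
        algebra_simps power2_eq_square add_divide_distrib diff_divide_distrib)
qed

lemma set_pmf_step:
  assumes "xs \<noteq> []" "set xs \<subseteq> {-1, 0, 1}" "ys \<in> set_pmf (step p xs)"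
  shows "\<exists>c\<in>{-1, 0, 1}. ys = xs @ [c]"
proof -
  have "Suc 0 \<le> length xs" using assms(1) by (simp add: Suc_le_eq)
  with assms(3) obtain u1 u2 a1 a2 where
    u: "u1 \<in> {1..length xs}" "u2 \<in> {1..length xs}" and a: "a1 \<in> set_pmf (rad p)" "a2 \<in> set_pmf (rad p)" and
    ys: "ys = xs @ [clamp (a1 * xs ! (u1 - 1) + a2 * xs ! (u2 - 1))]"
    by (auto simp: step_def set_bind_pmf)
  have "xs ! (u1 - 1) \<in> set xs" "xs ! (u2 - 1) \<in> set xs"
    using u by auto
  then have "xs ! (u1 - 1) \<in> {-1, 0, 1}" "xs ! (u2 - 1) \<in> {-1, 0, 1}"
    using assms(2) by auto
  moreover have "a1 \<in> {-1, 1}" "a2 \<in> {-1, 1}"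
    using a set_pmf_rad by auto
  ultimately have "clamp (a1 * xs ! (u1 - 1) + a2 * xs ! (u2 - 1)) \<in> {-1, 0, 1}"
    by (auto simp: clamp_def)
  with ys show ?thesis by blast
qed

lemma set_pmf_walk:
  assumes "ys \<in> set_pmf (walk p n)"
  shows "length ys = n \<and> set ys \<subseteq> {-1, 0, 1}"
  using assms
proof (induction n arbitrary: ys)
  case (Suc n)
  from Suc.prems obtain xs where xs: "xs \<in> set_pmf (walk p n)"
    and ys: "ys \<in> set_pmf (if n < 2 then map_pmf (\<lambda>x. xs @ [x]) (rad (1/2)) else step p xs)"
    by (auto simp: set_bind_pmf)
  have IH: "length xs = n" "set xs \<subseteq> {-1, 0, 1}" using Suc.IH[OF xs] by auto
  have "\<exists>c\<in>{-1, 0, 1}. ys = xs @ [c]"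
  proof (cases "n < 2")
    case True
    then show ?thesis using ys set_pmf_rad by auto
  next
    case False
    then have "xs \<noteq> []" using IH(1) by auto
    with False show ?thesis using ys set_pmf_step IH(2) by auto
  qed
  with IH show ?case by auto
qed simp

lemma finite_set_pmf_walk: "finite (set_pmf (walk p n))"
proof (induction n)
  case (Suc n)
  have "finite (set_pmf (if n < 2 then map_pmf (\<lambda>x. xs @ [x]) (rad (1/2)) else step p xs))"
    if "xs \<in> set_pmf (walk p n)" for xs
    using set_pmf_walk[OF that] finite_set_pmf_step[of xs] finite_set_pmf_rad by fastforce
  with Suc show ?case by (auto simp: set_bind_pmf)
qed simp

lemma expectation_walk_Suc:
  fixes h :: "real list \<Rightarrow> real"
  shows "measure_pmf.expectation (walk p (Suc n)) h = measure_pmf.expectation (walk p n) (\<lambda>xs.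
    if n < 2 then (h (xs @ [1]) + h (xs @ [-1])) / 2 else measure_pmf.expectation (step p xs) h)"
proof -
  have "finite (set_pmf (if n < 2 then map_pmf (\<lambda>x. xs @ [x]) (rad (1/2)) else step p xs))"
    if "xs \<in> set_pmf (walk p n)" for xs
    using set_pmf_walk[OF that] finite_set_pmf_step[of xs] finite_set_pmf_rad by fastforce
  then have "measure_pmf.expectation (walk p (Suc n)) h = measure_pmf.expectation (walk p n) (\<lambda>xs.
      measure_pmf.expectation (if n < 2 then map_pmf (\<lambda>x. xs @ [x]) (rad (1/2)) else step p xs) h)"
    by (simp add: expectation_bind_pmf_finite finite_set_pmf_walk)
  then show ?thesis
    by (cases "n < 2") (simp_all add: expectation_rad add_divide_distrib)
qed

lemma expectation_walk_Suc_step: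
  fixes h :: "real list \<Rightarrow> real"
  assumes "2 \<le> n"
  shows "measure_pmf.expectation (walk p (Suc n)) h =
    measure_pmf.expectation (walk p n) (\<lambda>xs. measure_pmf.expectation (step p xs) h)"
  using assms by (simp only: expectation_walk_Suc) simp

lemma expectation_walk_map_uminus:
  fixes h :: "real list \<Rightarrow> real"
  assumes p: "0 \<le> p" "p \<le> 1"
  shows "measure_pmf.expectation (walk p n) (\<lambda>xs. h (map uminus xs)) = measure_pmf.expectation (walk p n) h"
proof (induction n arbitrary: h)
  case (Suc n)
  define g where "g xs = (if n < 2 then (h (xs @ [1]) + h (xs @ [-1])) / 2
    else measure_pmf.expectation (step p xs) h)" for xs
  have step_sym: "measure_pmf.expectation (step p xs) (\<lambda>ys. h (map uminus ys)) =
      measure_pmf.expectation (step p (map uminus xs)) h"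
    if "xs \<noteq> []" "set xs \<subseteq> {-1, 0, 1}" for xs
  proof -
    have "set (map uminus xs) \<subseteq> {-1, 0, 1}" using that(2) by auto
    with that show ?thesis
      by (simp add: expectation_step p algebra_simps)
  qed
  have "measure_pmf.expectation (walk p (Suc n)) (\<lambda>xs. h (map uminus xs)) =
      measure_pmf.expectation (walk p n) (\<lambda>xs. g (map uminus xs))"
    unfolding expectation_walk_Suc g_def
  proof (rule expectation_cong_pmf)
    fix xs assume "xs \<in> set_pmf (walk p n)"
    then have xs: "length xs = n" "set xs \<subseteq> {-1, 0, 1}" using set_pmf_walk by auto
    show "(if n < 2 then (h (map uminus (xs @ [1])) + h (map uminus (xs @ [-1]))) / 2
        else measure_pmf.expectation (step p xs) (\<lambda>ys. h (map uminus ys))) =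
      (if n < 2 then (h (map uminus xs @ [1]) + h (map uminus xs @ [-1])) / 2
        else measure_pmf.expectation (step p (map uminus xs)) h)"
    proof (cases "n < 2")
      case False
      then have "xs \<noteq> []" using xs(1) by auto
      with False show ?thesis using step_sym xs(2) by simp
    qed (simp add: add.commute)
  qed
  also have "\<dots> = measure_pmf.expectation (walk p n) g"
    by (rule Suc.IH)
  also have "\<dots> = measure_pmf.expectation (walk p (Suc n)) h"
    unfolding expectation_walk_Suc g_def ..
  finally show ?case .
qed simp

lemma expectation_walk_sum_list:
  assumes "0 \<le> p" "p \<le> 1"
  shows "measure_pmf.expectation (walk p n) sum_list = 0"
  using expectation_walk_map_uminus[OF assms, where h = sum_list] by simp

abbreviation second_moment :: "real \<Rightarrow> nat \<Rightarrow> real" where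
  "second_moment p n \<equiv> measure_pmf.expectation (walk p n) (\<lambda>xs. (sum_list xs)\<^sup>2)"

lemma var_S_eq_second_moment:
  assumes "0 \<le> p" "p \<le> 1"
  shows "var_S p n = second_moment p n"
proof -
  have "var_S p n = second_moment p n - (measure_pmf.expectation (walk p n) sum_list)\<^sup>2"
    unfolding var_S_def
    by (rule measure_pmf.variance_eq) (auto intro: integrable_measure_pmf_finite finite_set_pmf_walk)
  with expectation_walk_sum_list[OF assms] show ?thesis by simp
qed

lemma second_moment_le: "second_moment p n \<le> (real n)\<^sup>2"
proof -
  have "(sum_list xs)\<^sup>2 \<le> (real n)\<^sup>2" if "xs \<in> set_pmf (walk p n)" for xs
  proof -
    have "\<bar>sum_list xs\<bar> \<le> real n"
      using set_pmf_walk[OF that] ternary_list_bounds[of xs] by fastforce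
    then show ?thesis
      by (metis abs_ge_zero power2_abs power_mono)
  qed
  then show ?thesis
    using expectation_mono_finite[OF finite_set_pmf_walk, of p n _ "\<lambda>_. (real n)\<^sup>2"] by simp
qed

lemma expectation_step_sum_list_sq_ge:
  assumes xs: "xs \<noteq> []" "set xs \<subseteq> {-1, 0, 1}" and p: "1/2 \<le> p" "p \<le> 1"
  shows "(sum_list xs)\<^sup>2 * (1 + 2 * (2*p - 1) / length xs)
    \<le> measure_pmf.expectation (step p xs) (\<lambda>ys. (sum_list ys)\<^sup>2)"
proof -
  define r where "r = 2*p - 1"
  define m where "m = mean xs"
  define q where "q = mean_sq xs"
  define s where "s = sum_list xs"
  define n where "n = real (length xs)"
  have n: "n > 0" using xs(1) by (simp add: n_def)
  have r: "0 \<le> r" "\<bar>r\<bar> \<le> 1" using p by (auto simp: r_def)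
  have q: "q \<le> 1" using ternary_mean_bounds(2)[OF xs] by (simp add: q_def)
  have up_down: "0 \<le> prob_up r m q" "0 \<le> prob_up r (- m) q"
    using prob_nonneg(1)[OF _ q] bias_mean_le_mean_sq[OF xs r(2)] by (auto simp: m_def q_def)
  have "measure_pmf.expectation (step p xs) (\<lambda>ys. (sum_list ys)\<^sup>2) =
      prob_up r m q * (s + 1)\<^sup>2 + prob_up r (- m) q * (s - 1)\<^sup>2 + prob_zero r m q * s\<^sup>2"
    using expectation_step[OF xs] p by (simp add: r_def m_def q_def s_def)
  also have "\<dots> = s\<^sup>2 * (prob_up r m q + prob_up r (- m) q + prob_zero r m q)
      + 2 * s * (prob_up r m q - prob_up r (- m) q) + (prob_up r m q + prob_up r (- m) q)"
    by (simp add: power2_eq_square algebra_simps)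
  also have "\<dots> = s\<^sup>2 + 2 * r * s\<^sup>2 / n * (2 - q) + (prob_up r m q + prob_up r (- m) q)"
    using n by (simp add: prob_total prob_up_minus_down m_def mean_def s_def n_def power2_eq_square)
  also have "\<dots> \<ge> s\<^sup>2 + 2 * r * s\<^sup>2 / n * 1"
    using up_down q r n by (intro add_increasing2 add_left_mono mult_left_mono) auto
  finally show ?thesis
    by (simp add: s_def n_def r_def algebra_simps)
qed

lemma second_moment_Suc_ge:
  assumes p: "1/2 \<le> p" "p \<le> 1" and n: "2 \<le> n"
  shows "second_moment p n * (1 + 2 * (2*p - 1) / n) \<le> second_moment p (Suc n)"
proof -
  have "second_moment p n * (1 + 2 * (2*p - 1) / n) =
      measure_pmf.expectation (walk p n) (\<lambda>xs. (sum_list xs)\<^sup>2 * (1 + 2 * (2*p - 1) / n))"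
    by simp
  also have "\<dots> \<le> measure_pmf.expectation (walk p n)
      (\<lambda>xs. measure_pmf.expectation (step p xs) (\<lambda>ys. (sum_list ys)\<^sup>2))"
  proof (rule expectation_mono_finite[OF finite_set_pmf_walk])
    fix xs assume "xs \<in> set_pmf (walk p n)"
    then have xs: "length xs = n" "set xs \<subseteq> {-1, 0, 1}" using set_pmf_walk by auto
    then have "xs \<noteq> []" using n by auto
    from expectation_step_sum_list_sq_ge[OF this xs(2) p] xs(1)
    show "(sum_list xs)\<^sup>2 * (1 + 2 * (2*p - 1) / n)
        \<le> measure_pmf.expectation (step p xs) (\<lambda>ys. (sum_list ys)\<^sup>2)"
      by simp
  qed
  also have "\<dots> = second_moment p (Suc n)"
    by (rule expectation_walk_Suc_step[OF n, symmetric])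
  finally show ?thesis .
qed

lemma second_moment_two: "second_moment p 2 = 2"
proof -
  have sq: "((s + 1)\<^sup>2 + (s - 1)\<^sup>2) / 2 = s\<^sup>2 + 1" for s :: real
    by (simp add: power2_eq_square field_simps)
  have "second_moment p (Suc 0) = 1"
    by (simp only: expectation_walk_Suc) simp
  moreover have "second_moment p (Suc (Suc 0)) = second_moment p (Suc 0) + 1"
    by (simp only: expectation_walk_Suc)
      (simp add: sq integrable_measure_pmf_finite finite_set_pmf_walk)
  ultimately show ?thesis by (simp add: numeral_2_eq_2)
qed

lemma second_moment_growth:
  assumes p: "7/8 \<le> p" "p \<le> 1" and n: "2 \<le> n"
  shows "real n * (real n + 1) * (real n + 2) / 6 \<le> (second_moment p n)\<^sup>2"
  using n
proof (induction n rule: dec_induct)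
  case base
  then show ?case by (simp add: second_moment_two)
next
  case (step n)
  have n: "real n > 0" using step.hyps by simp
  have "1 + 3 / n \<le> (1 + 3 / (2 * n))\<^sup>2"
    using n by (simp add: power2_eq_square field_simps)
  also have "\<dots> \<le> (1 + 2 * (2*p - 1) / n)\<^sup>2"
    using n p by (intro power_mono) (auto simp: field_simps)
  finally have factor: "1 + 3 / n \<le> (1 + 2 * (2*p - 1) / n)\<^sup>2" .
  have "real (Suc n) * (real (Suc n) + 1) * (real (Suc n) + 2) / 6 =
      real n * (real n + 1) * (real n + 2) / 6 * (1 + 3 / n)"
    using n by (simp add: field_simps)
  also have "\<dots> \<le> (second_moment p n)\<^sup>2 * (1 + 2 * (2*p - 1) / n)\<^sup>2"
    using step.IH factor n by (intro mult_mono) auto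
  also have "\<dots> = (second_moment p n * (1 + 2 * (2*p - 1) / n))\<^sup>2"
    by (simp add: power_mult_distrib)
  also have "\<dots> \<le> (second_moment p (Suc n))\<^sup>2"
    using second_moment_Suc_ge[of p n] p step.hyps n by (intro power_mono) auto
  finally show ?case .
qed

lemma abs_mult_le:
  fixes a b :: real
  assumes "\<bar>a\<bar> \<le> A" "\<bar>b\<bar> \<le> B"
  shows "\<bar>a * b\<bar> \<le> A * B"
  unfolding abs_mult using assms by (intro mult_mono) auto

lemma perturbed_square_ge:
  fixes m d e x h u w :: real
  assumes m: "\<bar>m\<bar> \<le> 1" and x: "\<bar>x\<bar> \<le> 1" and d: "\<bar>d\<bar> \<le> 2 * h" and e: "\<bar>e\<bar> \<le> h"
    and h: "0 \<le> h" "h \<le> 1" and u: "0 < u" and w: "0 < w"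
  shows "m\<^sup>2 + 2*m*(1 - m\<^sup>2/u)*d - 2*w*m\<^sup>2*x*e - (68/u + 25*w) * h\<^sup>2
    \<le> (m + d)\<^sup>2 * (1 - (2*m*d + d\<^sup>2)/u - w*(2*x*e + e\<^sup>2))"
proof -
  define X where "X = 2*m*d + d\<^sup>2"
  define D where "D = X/u + w*(2*x*e + e\<^sup>2)"
  have hh: "h\<^sup>2 \<le> h" using h by (simp add: power2_eq_square mult_left_le)
  have d2: "d\<^sup>2 \<le> 4 * h\<^sup>2" and e2: "e\<^sup>2 \<le> h\<^sup>2" and m2: "m\<^sup>2 \<le> 1"
    using abs_mult_le[OF d d] abs_mult_le[OF e e] abs_mult_le[OF m m] by (auto simp: power2_eq_square)
  have X: "\<bar>X\<bar> \<le> 8 * h"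
    using abs_mult_le[OF m d] d2 hh abs_triangle_ineq[of "2*m*d" "d\<^sup>2"] by (simp add: X_def abs_mult)
  have "\<bar>2*x*e + e\<^sup>2\<bar> \<le> 3 * h"
    using abs_mult_le[OF x e] e2 hh abs_triangle_ineq[of "2*x*e" "e\<^sup>2"] by (simp add: abs_mult)
  then have "\<bar>w*(2*x*e + e\<^sup>2)\<bar> \<le> w * (3 * h)"
    using w by (simp add: abs_mult mult_left_mono)
  moreover have "\<bar>X/u\<bar> \<le> 8 * h / u"
    using X u by (simp add: abs_divide divide_right_mono)
  ultimately have "\<bar>D\<bar> \<le> 8 * h / u + w * (3 * h)"
    unfolding D_def using abs_triangle_ineq[of "X/u" "w*(2*x*e + e\<^sup>2)"] by linarith
  from abs_mult_le[OF X this] have cross: "X * D \<le> 64 * h\<^sup>2 / u + 24 * w * h\<^sup>2"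
    by (simp add: power2_eq_square field_simps)
  have "m\<^sup>2 * d\<^sup>2 / u \<le> 4 * h\<^sup>2 / u" "w * m\<^sup>2 * e\<^sup>2 \<le> w * h\<^sup>2"
    using mult_mono[OF m2 d2] mult_mono[OF m2 e2] u w by (auto simp: divide_right_mono)
  moreover have "(m + d)\<^sup>2 * (1 - X/u - w*(2*x*e + e\<^sup>2)) = m\<^sup>2 + 2*m*(1 - m\<^sup>2/u)*d - 2*w*m\<^sup>2*x*e
      + (d\<^sup>2 - m\<^sup>2*d\<^sup>2/u - w*m\<^sup>2*e\<^sup>2 - X * D)"
    unfolding D_def X_def using u by (simp add: power2_eq_square field_simps)
  moreover have "(68/u + 25*w) * h\<^sup>2 = 4 * h\<^sup>2 / u + 64 * h\<^sup>2 / u + w * h\<^sup>2 + 24 * w * h\<^sup>2"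
    by (simp add: field_simps)
  moreover have "0 \<le> d\<^sup>2" by simp
  ultimately show ?thesis
    using cross unfolding X_def by linarith
qed

lemma square_exp_first_order_ge:
  fixes m q c h u w q0 :: real
  assumes m: "\<bar>m\<bar> \<le> 1" and q: "0 \<le> q" "q \<le> 1" and q0: "0 \<le> q0" "q0 \<le> 1"
    and h: "0 \<le> h" "h \<le> 1" and u: "0 < u" and w: "0 < w" and c: "\<bar>c - m\<bar> \<le> 2" "\<bar>c\<^sup>2 - q\<bar> \<le> 1"
  shows "exp (- m\<^sup>2/u - w*(q - q0)\<^sup>2) *
      (m\<^sup>2 + h * (2*m*(1 - m\<^sup>2/u)*(c - m) - 2*w*m\<^sup>2*(q - q0)*(c\<^sup>2 - q)) - (68/u + 25*w) * h\<^sup>2)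
    \<le> (m + h*(c - m))\<^sup>2 * exp (- (m + h*(c - m))\<^sup>2/u - w*(q + h*(c\<^sup>2 - q) - q0)\<^sup>2)"
proof -
  define d where "d = h*(c - m)"
  define e where "e = h*(c\<^sup>2 - q)"
  define x where "x = q - q0"
  define A where "A = - m\<^sup>2/u - w*x\<^sup>2"
  define D where "D = (2*m*d + d\<^sup>2)/u + w*(2*x*e + e\<^sup>2)"
  have exponent: "- (m + d)\<^sup>2/u - w*(q + e - q0)\<^sup>2 = A - D"
    unfolding A_def D_def x_def using u by (simp add: power2_eq_square field_simps)
  have "\<bar>d\<bar> \<le> 2 * h" "\<bar>e\<bar> \<le> h" "\<bar>x\<bar> \<le> 1"
    using abs_mult_le[of h h "c - m" 2] abs_mult_le[of h h "c\<^sup>2 - q" 1] c h q q0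
    by (auto simp: d_def e_def x_def mult.commute)
  from perturbed_square_ge[OF m this(3,1,2) h u w]
  have poly: "m\<^sup>2 + h * (2*m*(1 - m\<^sup>2/u)*(c - m) - 2*w*m\<^sup>2*(q - q0)*(c\<^sup>2 - q)) - (68/u + 25*w) * h\<^sup>2
      \<le> (m + d)\<^sup>2 * (1 - D)"
    by (simp add: D_def d_def e_def x_def diff_diff_eq algebra_simps)
  have "exp A * (1 - D) \<le> exp A * exp (- D)"
    using exp_ge_add_one_self[of "- D"] by (intro mult_left_mono) auto
  also have "\<dots> = exp (A - D)"
    by (simp add: exp_add[symmetric])
  finally have exp_ge: "exp A * (1 - D) \<le> exp (A - D)" .
  have "exp (- m\<^sup>2/u - w*(q - q0)\<^sup>2) *
      (m\<^sup>2 + h * (2*m*(1 - m\<^sup>2/u)*(c - m) - 2*w*m\<^sup>2*(q - q0)*(c\<^sup>2 - q)) - (68/u + 25*w) * h\<^sup>2)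
    \<le> exp A * ((m + d)\<^sup>2 * (1 - D))"
    unfolding A_def x_def by (rule mult_left_mono[OF poly]) simp
  also have "\<dots> \<le> (m + d)\<^sup>2 * exp (A - D)"
    using mult_left_mono[OF exp_ge, of "(m + d)\<^sup>2"] by (simp add: ac_simps)
  also have "\<dots> = (m + h*(c - m))\<^sup>2 * exp (- (m + h*(c - m))\<^sup>2/u - w*(q + h*(c\<^sup>2 - q) - q0)\<^sup>2)"
    by (simp only: exponent[symmetric] d_def e_def)
  finally show ?thesis .
qed

locale ballistic_regime =
  fixes p :: real
  assumes p_gt: "7/8 < p" and p_lt: "p < 1"
begin

definition bias :: real where
  "bias = 2*p - 1"

text \<open>With \<open>r = bias\<close>, the pair (mean, mean square) of the history follows the drift
  \<open>m' = m (r (2 - q) - 1)\<close>, \<open>q' = q - 3/2 q\<^sup>2 + r\<^sup>2 m\<^sup>2 / 2\<close> (see \<open>prob_up_minus_down\<close> and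
  \<open>prob_up_plus_down\<close>), whose fixed point with \<open>m \<noteq> 0\<close> is
  \<open>(m\<^sup>2, q) = (m_star_sq, q_star)\<close>.\<close>

definition q_star :: real where
  "q_star = 2 - 1 / bias"

definition m_star_sq :: real where
  "m_star_sq = (3 * q_star\<^sup>2 - 2 * q_star) / bias\<^sup>2"

definition weight :: real where
  "weight = 2 / (bias * m_star_sq)"

definition error_const :: real where
  "error_const = 68 / m_star_sq + 25 * weight"

definition lyapunov :: "real list \<Rightarrow> real" where
  "lyapunov xs = (mean xs)\<^sup>2 *
    exp (- (mean xs)\<^sup>2 / m_star_sq - weight * (mean_sq xs - q_star)\<^sup>2)"

lemma bias_bounds: "3/4 < bias" "bias < 1"
  using p_gt p_lt by (auto simp: bias_def)

lemma q_star_bounds: "2/3 < q_star" "q_star < 1"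
  using bias_bounds by (auto simp: q_star_def field_simps)

lemma m_star_sq_pos: "0 < m_star_sq"
proof -
  have "0 < q_star * (3 * q_star - 2)"
    using q_star_bounds by simp
  then show ?thesis
    using bias_bounds by (simp add: m_star_sq_def power2_eq_square algebra_simps)
qed

lemma weight_pos: "0 < weight"
  using bias_bounds m_star_sq_pos by (simp add: weight_def)

lemma error_const_pos: "0 < error_const"
  using m_star_sq_pos weight_pos by (simp add: error_const_def add_pos_pos)

lemma first_order_drift:
  fixes m q :: real
  defines "L c \<equiv> 2*m*(1 - m\<^sup>2/m_star_sq)*(c - m) - 2*weight*m\<^sup>2*(q - q_star)*(c\<^sup>2 - q)"
  shows "prob_up bias m q * L 1 + prob_up bias (- m) q * L (-1) + prob_zero bias m q * L 0 =
    2*weight*m\<^sup>2*(q - q_star)\<^sup>2 * (3/2*(q + q_star) - 1)"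
proof -
  define P\<^sub>1 P\<^sub>2 P\<^sub>0 where "P\<^sub>1 = prob_up bias m q" "P\<^sub>2 = prob_up bias (- m) q" "P\<^sub>0 = prob_zero bias m q"
  have bias: "bias \<noteq> 0" "bias * (2 - q_star) = 1"
    using bias_bounds by (auto simp: q_star_def field_simps)
  have "3 * q_star\<^sup>2 - 2 * q_star \<noteq> 0"
    using m_star_sq_pos bias(1) by (auto simp: m_star_sq_def)
  note nonzero = bias(1) this
  have "P\<^sub>1 * (1 - m) + P\<^sub>2 * (-1 - m) + P\<^sub>0 * (0 - m) = (P\<^sub>1 - P\<^sub>2) - m * (P\<^sub>1 + P\<^sub>2 + P\<^sub>0)"
    by (simp add: algebra_simps)
  also have "\<dots> = bias * m * (2 - q) - m * (bias * (2 - q_star))"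
    unfolding P\<^sub>1_P\<^sub>2_P\<^sub>0_def prob_total prob_up_minus_down bias(2) by simp
  finally have mean_drift: "P\<^sub>1 * (1 - m) + P\<^sub>2 * (-1 - m) + P\<^sub>0 * (0 - m) = bias * m * (q_star - q)"
    by (simp add: algebra_simps)
  have "P\<^sub>1 * (1 - q) + P\<^sub>2 * (1 - q) + P\<^sub>0 * (0 - q) = (P\<^sub>1 + P\<^sub>2) - q * (P\<^sub>1 + P\<^sub>2 + P\<^sub>0)"
    by (simp add: algebra_simps)
  also have "\<dots> = (P\<^sub>1 + P\<^sub>2) - q"
    unfolding P\<^sub>1_P\<^sub>2_P\<^sub>0_def prob_total by simp
  finally have sq_drift: "P\<^sub>1 * (1 - q) + P\<^sub>2 * (1 - q) + P\<^sub>0 * (0 - q) = q - 3/2 * q\<^sup>2 + bias\<^sup>2 * m\<^sup>2 / 2"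
    unfolding P\<^sub>1_P\<^sub>2_P\<^sub>0_def prob_up_plus_down by simp
  define a b where "a = 2*m*(1 - m\<^sup>2/m_star_sq)" "b = 2*weight*m\<^sup>2*(q - q_star)"
  have L: "L c = a * (c - m) - b * (c\<^sup>2 - q)" for c
    by (simp add: L_def a_b_def)
  have "P\<^sub>1 * L 1 + P\<^sub>2 * L (-1) + P\<^sub>0 * L 0 =
      a * (P\<^sub>1 * (1 - m) + P\<^sub>2 * (-1 - m) + P\<^sub>0 * (0 - m)) - b * (P\<^sub>1 * (1 - q) + P\<^sub>2 * (1 - q) + P\<^sub>0 * (0 - q))"
    unfolding L by (simp add: algebra_simps)
  also have "\<dots> = 2*weight*m\<^sup>2*(q - q_star)\<^sup>2 * (3/2*(q + q_star) - 1)"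
    unfolding mean_drift sq_drift a_b_def weight_def m_star_sq_def using nonzero
    by (simp add: divide_simps) algebra
  finally show ?thesis
    unfolding P\<^sub>1_P\<^sub>2_P\<^sub>0_def .
qed

lemma lyapunov_bounds:
  assumes "xs \<noteq> []" "set xs \<subseteq> {-1, 0, 1}"
  shows "exp (- 1/m_star_sq - weight) * (mean xs)\<^sup>2 \<le> lyapunov xs" "lyapunov xs \<le> (mean xs)\<^sup>2"
proof -
  define A where "A = - (mean xs)\<^sup>2 / m_star_sq - weight * (mean_sq xs - q_star)\<^sup>2"
  have m: "(mean xs)\<^sup>2 \<le> 1" and q: "(mean_sq xs - q_star)\<^sup>2 \<le> 1"
    using ternary_mean_bounds[OF assms] q_star_bounds abs_mult_le[of "mean xs" 1 "mean xs" 1]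
      abs_mult_le[of "mean_sq xs - q_star" 1 "mean_sq xs - q_star" 1]
    by (auto simp: power2_eq_square)
  have "(mean xs)\<^sup>2 / m_star_sq \<le> 1 / m_star_sq" "weight * (mean_sq xs - q_star)\<^sup>2 \<le> weight"
    using divide_right_mono[OF m, of m_star_sq] mult_left_mono[OF q, of weight]
      m_star_sq_pos weight_pos by auto
  moreover have "0 \<le> (mean xs)\<^sup>2 / m_star_sq" "0 \<le> weight * (mean_sq xs - q_star)\<^sup>2"
    using m_star_sq_pos weight_pos by auto
  ultimately have "- 1/m_star_sq - weight \<le> A" "A \<le> 0"
    by (auto simp: A_def)
  then have exp_A: "exp (- 1/m_star_sq - weight) \<le> exp A" "exp A \<le> 1"
    by auto
  show "exp (- 1/m_star_sq - weight) * (mean xs)\<^sup>2 \<le> lyapunov xs"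
    unfolding lyapunov_def A_def[symmetric]
    using mult_right_mono[OF exp_A(1), of "(mean xs)\<^sup>2"] by (simp add: mult.commute)
  show "lyapunov xs \<le> (mean xs)\<^sup>2"
    unfolding lyapunov_def A_def[symmetric]
    using mult_left_mono[OF exp_A(2), of "(mean xs)\<^sup>2"] by simp
qed

lemma expectation_step_lyapunov_ge:
  assumes xs: "xs \<noteq> []" "set xs \<subseteq> {-1, 0, 1}"
  shows "lyapunov xs - error_const / (real (length xs) + 1)\<^sup>2
    \<le> measure_pmf.expectation (step p xs) lyapunov"
proof -
  define m q h where "m = mean xs" "q = mean_sq xs" "h = 1 / (real (length xs) + 1)"
  define A where "A = - m\<^sup>2/m_star_sq - weight*(q - q_star)\<^sup>2"
  define L where "L c = 2*m*(1 - m\<^sup>2/m_star_sq)*(c - m) - 2*weight*m\<^sup>2*(q - q_star)*(c\<^sup>2 - q)"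
    for c
  define K where "K = error_const"
  define P\<^sub>1 P\<^sub>2 P\<^sub>0 where "P\<^sub>1 = prob_up bias m q" "P\<^sub>2 = prob_up bias (- m) q" "P\<^sub>0 = prob_zero bias m q"
  have mq: "\<bar>m\<bar> \<le> q" "q \<le> 1"
    using ternary_mean_bounds[OF xs] by (simp_all add: m_q_h_def)
  have h: "0 \<le> h" "h \<le> 1"
    by (auto simp: m_q_h_def)
  have append: "exp A * (m\<^sup>2 + h * L c - K * h\<^sup>2) \<le> lyapunov (xs @ [c])" if c: "c \<in> {-1, 0, 1}" for c
  proof -
    have "\<bar>c - m\<bar> \<le> 2" "\<bar>c\<^sup>2 - q\<bar> \<le> 1"
      using c mq by auto
    from square_exp_first_order_ge[of m q q_star h m_star_sq weight c, OF _ _ _ _ _ h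
        m_star_sq_pos weight_pos this] mq q_star_bounds
    have "exp A * (m\<^sup>2 + h * L c - K * h\<^sup>2) \<le> (m + h*(c - m))\<^sup>2 *
        exp (- (m + h*(c - m))\<^sup>2/m_star_sq - weight*(q + h*(c\<^sup>2 - q) - q_star)\<^sup>2)"
      by (simp add: A_def L_def K_def error_const_def)
    also have "\<dots> = lyapunov (xs @ [c])"
      by (simp add: lyapunov_def mean_append_single[OF xs(1)] mean_sq_append_single[OF xs(1)] m_q_h_def)
    finally show ?thesis .
  qed
  have P: "0 \<le> P\<^sub>1" "0 \<le> P\<^sub>2" "0 \<le> P\<^sub>0"
    using prob_nonneg[OF _ mq(2)] bias_mean_le_mean_sq[OF xs, of bias] bias_bounds
    by (auto simp: P\<^sub>1_P\<^sub>2_P\<^sub>0_def m_q_h_def)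
  have drift: "0 \<le> P\<^sub>1 * L 1 + P\<^sub>2 * L (-1) + P\<^sub>0 * L 0"
    unfolding P\<^sub>1_P\<^sub>2_P\<^sub>0_def L_def first_order_drift
    using weight_pos q_star_bounds mq by simp
  have "0 \<le> m\<^sup>2 / m_star_sq" "0 \<le> weight * (q - q_star)\<^sup>2"
    using m_star_sq_pos weight_pos by auto
  then have "exp A \<le> 1" "0 \<le> K"
    using error_const_pos by (auto simp: A_def K_def)
  have "lyapunov xs - K / (real (length xs) + 1)\<^sup>2 = m\<^sup>2 * exp A - K * h\<^sup>2"
    by (simp add: lyapunov_def A_def m_q_h_def power_one_over)
  also have "\<dots> \<le> exp A * (m\<^sup>2 - K * h\<^sup>2)"
    using mult_right_mono[OF \<open>exp A \<le> 1\<close>, of "K * h\<^sup>2"] \<open>0 \<le> K\<close> by (simp add: algebra_simps)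
  also have "\<dots> \<le> exp A * (m\<^sup>2 - K * h\<^sup>2 + h * (P\<^sub>1 * L 1 + P\<^sub>2 * L (-1) + P\<^sub>0 * L 0))"
    using drift h by simp
  also have "\<dots> = P\<^sub>1 * (exp A * (m\<^sup>2 + h * L 1 - K * h\<^sup>2)) + P\<^sub>2 * (exp A * (m\<^sup>2 + h * L (-1) - K * h\<^sup>2))
      + P\<^sub>0 * (exp A * (m\<^sup>2 + h * L 0 - K * h\<^sup>2))"
    using prob_total[of bias m q] unfolding P\<^sub>1_P\<^sub>2_P\<^sub>0_def[symmetric] by algebra
  also have "\<dots> \<le> P\<^sub>1 * lyapunov (xs @ [1]) + P\<^sub>2 * lyapunov (xs @ [-1]) + P\<^sub>0 * lyapunov (xs @ [0])"
    using append P by (intro add_mono mult_left_mono) auto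
  also have "\<dots> = measure_pmf.expectation (step p xs) lyapunov"
    using expectation_step[OF xs] p_gt p_lt by (simp add: P\<^sub>1_P\<^sub>2_P\<^sub>0_def m_q_h_def bias_def)
  finally show ?thesis
    by (simp add: K_def)
qed

lemma expectation_walk_lyapunov_Suc:
  assumes n: "2 \<le> n"
  shows "measure_pmf.expectation (walk p n) lyapunov - error_const / (real n + 1)\<^sup>2
    \<le> measure_pmf.expectation (walk p (Suc n)) lyapunov"
proof -
  have "measure_pmf.expectation (walk p n) lyapunov - error_const / (real n + 1)\<^sup>2 =
      measure_pmf.expectation (walk p n) (\<lambda>xs. lyapunov xs - error_const / (real n + 1)\<^sup>2)"
    by (simp add: integrable_measure_pmf_finite finite_set_pmf_walk)
  also have "\<dots> \<le> measure_pmf.expectation (walk p n) (\<lambda>xs. measure_pmf.expectation (step p xs) lyapunov)"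
  proof (rule expectation_mono_finite[OF finite_set_pmf_walk])
    fix xs assume "xs \<in> set_pmf (walk p n)"
    then have xs: "length xs = n" "set xs \<subseteq> {-1, 0, 1}" using set_pmf_walk by auto
    then have "xs \<noteq> []" using n by auto
    from expectation_step_lyapunov_ge[OF this xs(2)] xs(1)
    show "lyapunov xs - error_const / (real n + 1)\<^sup>2 \<le> measure_pmf.expectation (step p xs) lyapunov"
      by simp
  qed
  also have "\<dots> = measure_pmf.expectation (walk p (Suc n)) lyapunov"
    by (rule expectation_walk_Suc_step[OF n, symmetric])
  finally show ?thesis .
qed

lemma expectation_walk_lyapunov_mono:
  assumes n0: "2 \<le> n0" and n: "n0 \<le> n"
  shows "measure_pmf.expectation (walk p n0) lyapunov - error_const / n0
    \<le> measure_pmf.expectation (walk p n) lyapunov - error_const / n"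
  using n
proof (induction n rule: dec_induct)
  case (step n)
  have n: "2 \<le> n" "real n > 0" using step.hyps n0 by auto
  have "1 / (real n + 1)\<^sup>2 \<le> 1 / (real n * (real n + 1))"
    using n(2) by (intro divide_left_mono) (auto simp: power2_eq_square)
  also have "\<dots> = 1 / real n - 1 / (real n + 1)"
    using n(2) by (simp add: field_simps)
  finally have "1 / (real n + 1)\<^sup>2 + 1 / (real n + 1) \<le> 1 / real n"
    by simp
  from mult_left_mono[OF this, of error_const] error_const_pos
  have loss: "error_const / (real n + 1)\<^sup>2 + error_const / (real n + 1) \<le> error_const / real n"
    by (simp add: distrib_left)
  have Suc: "real (Suc n) = real n + 1" by simp
  show ?case
    unfolding Suc using loss step.IH expectation_walk_lyapunov_Suc[OF n(1)] by linarith
qed simp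

lemma expectation_walk_lyapunov_bounds:
  assumes n: "1 \<le> n"
  shows "exp (- 1/m_star_sq - weight) * (second_moment p n / (real n)\<^sup>2)
      \<le> measure_pmf.expectation (walk p n) lyapunov"
    "measure_pmf.expectation (walk p n) lyapunov \<le> second_moment p n / (real n)\<^sup>2"
proof -
  have mean: "(mean xs)\<^sup>2 = (sum_list xs)\<^sup>2 / (real n)\<^sup>2" "xs \<noteq> []" "set xs \<subseteq> {-1, 0, 1}"
    if "xs \<in> set_pmf (walk p n)" for xs
    using set_pmf_walk[OF that] n by (auto simp: mean_def power_divide)
  have "measure_pmf.expectation (walk p n) (\<lambda>xs. exp (- 1/m_star_sq - weight) * (mean xs)\<^sup>2)
      \<le> measure_pmf.expectation (walk p n) lyapunov"
    by (rule expectation_mono_finite[OF finite_set_pmf_walk]) (metis lyapunov_bounds(1) mean(2,3))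
  then show "exp (- 1/m_star_sq - weight) * (second_moment p n / (real n)\<^sup>2)
      \<le> measure_pmf.expectation (walk p n) lyapunov"
    using expectation_cong_pmf[of "walk p n" "\<lambda>xs. (mean xs)\<^sup>2"] mean(1) by simp
  have "measure_pmf.expectation (walk p n) lyapunov \<le> measure_pmf.expectation (walk p n) (\<lambda>xs. (mean xs)\<^sup>2)"
    by (rule expectation_mono_finite[OF finite_set_pmf_walk]) (metis lyapunov_bounds(2) mean(2,3))
  then show "measure_pmf.expectation (walk p n) lyapunov \<le> second_moment p n / (real n)\<^sup>2"
    using expectation_cong_pmf[of "walk p n" "\<lambda>xs. (mean xs)\<^sup>2"] mean(1) by simp
qed

text \<open>Since \<open>bias > 3/4\<close>, the second moment is at least of order \<open>n powr (3/2)\<close>, so the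
  expected Lyapunov function eventually exceeds twice its total future loss \<open>error_const / n\<close>.\<close>

lemma lyapunov_start:
  obtains n0 where "2 \<le> n0" "2 * error_const / n0 \<le> measure_pmf.expectation (walk p n0) lyapunov"
proof -
  define a K where "a = exp (- 1/m_star_sq - weight)" "K = error_const"
  define n0 where "n0 = max 2 (nat \<lceil>24 * K\<^sup>2 / a\<^sup>2\<rceil>)"
  have a: "a > 0" and K: "K > 0" using error_const_pos by (auto simp: a_K_def)
  have n0: "2 \<le> n0" by (simp add: n0_def)
  have "24 * K\<^sup>2 / a\<^sup>2 \<le> real n0"
    unfolding n0_def by linarith
  then have "(2 * K * n0 / a)\<^sup>2 \<le> real n0 * real n0 * real n0 / 6"
    using a n0 by (simp add: power2_eq_square field_simps mult_right_mono)
  also have "\<dots> \<le> real n0 * (real n0 + 1) * (real n0 + 2) / 6"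
    by (intro divide_right_mono mult_mono) auto
  also have "\<dots> \<le> (second_moment p n0)\<^sup>2"
    using second_moment_growth[OF _ _ n0] p_gt p_lt by simp
  finally have "2 * K * n0 / a \<le> second_moment p n0"
    by (rule power2_le_imp_le) simp
  then have "2 * K / n0 \<le> a * (second_moment p n0 / (real n0)\<^sup>2)"
    using a n0 by (simp add: field_simps power2_eq_square)
  also have "\<dots> \<le> measure_pmf.expectation (walk p n0) lyapunov"
    using expectation_walk_lyapunov_bounds(1)[of n0] n0 by (simp add: a_K_def)
  finally show ?thesis
    using that n0 by (simp add: a_K_def)
qed

lemma second_moment_quadratic_lower:
  obtains c where "0 < c" "\<forall>\<^sub>F n in sequentially. c * (real n)\<^sup>2 \<le> second_moment p n"
proof -
  obtain n0 where n0: "2 \<le> n0" "2 * error_const / n0 \<le> measure_pmf.expectation (walk p n0) lyapunov"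
    using lyapunov_start .
  have "\<forall>\<^sub>F n in sequentially. error_const / n0 * (real n)\<^sup>2 \<le> second_moment p n"
  proof (rule eventually_sequentiallyI[of n0])
    fix n assume n: "n0 \<le> n"
    have "0 \<le> error_const / n" "2 * error_const / n0 = 2 * (error_const / n0)"
      using error_const_pos by simp_all
    then have "error_const / n0 \<le> measure_pmf.expectation (walk p n) lyapunov"
      using expectation_walk_lyapunov_mono[OF n0(1) n] n0(2) by linarith
    also have "\<dots> \<le> second_moment p n / (real n)\<^sup>2"
      using expectation_walk_lyapunov_bounds(2)[of n] n n0 by simp
    finally show "error_const / n0 * (real n)\<^sup>2 \<le> second_moment p n"
      using n n0 by (simp add: field_simps)
  qed
  moreover have "0 < error_const / n0"
    using error_const_pos n0 by simp
  ultimately show ?thesis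
    using that by blast
qed

end

theorem corollary2p2:
  fixes p :: real
  assumes "7/8 < p" and "p < 1"
  shows "\<exists>c C. 0 < c \<and> c \<le> C \<and>
           (\<forall>\<^sub>F n in sequentially. c * real n ^ 2 \<le> var_S p n \<and> var_S p n \<le> C * real n ^ 2)"
proof -
  interpret ballistic_regime p
    using assms by unfold_locales
  obtain c where c: "0 < c" and lower: "\<forall>\<^sub>F n in sequentially. c * (real n)\<^sup>2 \<le> second_moment p n"
    using second_moment_quadratic_lower .
  have var: "var_S p n = second_moment p n" for n
    using assms by (intro var_S_eq_second_moment) auto
  have "\<forall>\<^sub>F n in sequentially. min c 1 * (real n)\<^sup>2 \<le> var_S p n \<and> var_S p n \<le> 1 * (real n)\<^sup>2"
    using lower
  proof eventually_elim
    case (elim n)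
    have "min c 1 * (real n)\<^sup>2 \<le> c * (real n)\<^sup>2"
      by (intro mult_right_mono) auto
    with elim show ?case
      using second_moment_le[of p n] by (simp add: var)
  qed
  then show ?thesis
    using c by (intro exI[of _ "min c 1"] exI[of _ 1]) auto
qed

end
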